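(* Consider the averaged switched RLC circuit $$-L\dot I=RI+\Gamma(u)V-B(u)V_s,\qquad C\dot V=\Gamma(u)^\top I-GV,$$ where $\Gamma(u)=u\Gamma_1+(1-u)\Gamma_0$, $B(u)=uB_1+(1-u)B_0$, $u\in[0,1]$ is the duty cycle and $V_s\in\mathbb{R}^m$ is a constant voltage source, together with its extended dynamics $$-L\ddot I=R\dot I+\Gamma(u)\dot V+\big((\Gamma_1-\Gamma_0)V-(B_1-B_0)V_s\big)\upsilon,\quad C\ddot V=\Gamma(u)^\top\dot I+(\Gamma_1-\Gamma_0)^\top I\,\upsilon-G\dot V,\quad \dot u=\upsilon,$$ with extended state $(I,V,\dot I,\dot V,u)$ and input $\upsilon\in\mathbb{R}$. Assume $L,C$ are constant symmetric positive definite and $R,G$ are symmetric positive semi-definite. Then the extended system is passive with respect to the storage function $S=\tfrac12\dot I^\top L\dot I+\tfrac12\dot V^\top C\dot V$ and the port-variables $\upsilon$ and $$y=\dot V^\top(\Gamma_1-\Gamma_0)^\top I-\dot I^\top(\Gamma_1-\Gamma_0)V-\dot I^\top(B_0-B_1)V_s,$$ i.e. $\dot S\le \upsilon\, y$ along trajectories.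
   Context: $I\in\mathbb{R}^\sigma$ (inductor currents), $V\in\mathbb{R}^\rho$ (capacitor voltages), $L\in\mathbb{R}^{\sigma\times\sigma}$, $C\in\mathbb{R}^{\rho\times\rho}$, $R\in\mathbb{R}^{\sigma\times\sigma}$, $G\in\mathbb{R}^{\rho\times\rho}$, $\Gamma_0,\Gamma_1\in\mathbb{R}^{\sigma\times\rho}$, $B_0,B_1\in\mathbb{R}^{\sigma\times m}$ constant. Passivity with respect to storage $S\ge0$ and port-variables (input $a$, output $b$) means $\dot S\le a^\top b$ along trajectories. *)

theory Defs
  imports "HOL-Analysis.Analysis"
begin

definition sym_mat :: "real^'n^'n \<Rightarrow> bool" where
  "sym_mat A \<longleftrightarrow> transpose A = A"

definition pos_def_mat :: "real^'n^'n \<Rightarrow> bool" where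
  "pos_def_mat A \<longleftrightarrow> sym_mat A \<and> (\<forall>x. x \<noteq> 0 \<longrightarrow> x \<bullet> (A *v x) > 0)"

definition pos_semidef_mat :: "real^'n^'n \<Rightarrow> bool" where
  "pos_semidef_mat A \<longleftrightarrow> sym_mat A \<and> (\<forall>x. x \<bullet> (A *v x) \<ge> 0)"

end

theory Submission
  imports Defs
begin

text \<open>Differentiating the storage along a trajectory and substituting the dynamics, the
  interconnection terms \<open>\<dot>I\<^sup>T \<Gamma>(u) \<dot>V\<close> coming from the two equations cancel, because
  \<open>\<Gamma>(u)\<close> enters the current equation and its transpose the voltage equation. What remains
  is the supplied power \<open>\<upsilon> y\<close> minus the dissipation \<open>\<dot>I\<^sup>T R \<dot>I + \<dot>V\<^sup>T G \<dot>V \<ge> 0\<close>.\<close>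

lemma inner_transpose_matrix_vector:
  fixes A :: "real^'n^'m"
  shows "x \<bullet> (transpose A *v y) = y \<bullet> (A *v x)"
  by (metis dot_lmul_matrix inner_commute transpose_matrix_vector)

lemma sym_mat_inner_commute:
  assumes "sym_mat A"
  shows "x \<bullet> (A *v y) = y \<bullet> (A *v x)"
  using inner_transpose_matrix_vector[of x A y] assms unfolding sym_mat_def by simp

lemma has_real_derivative_half_quadratic_form:
  assumes A: "sym_mat A" and f: "(f has_vector_derivative f') (at t within T)"
  shows "((\<lambda>\<tau>. (1/2) * (f \<tau> \<bullet> (A *v f \<tau>))) has_real_derivative f t \<bullet> (A *v f'))
           (at t within T)"
proof -
  have Af: "((\<lambda>\<tau>. A *v f \<tau>) has_vector_derivative A *v f') (at t within T)"
    by (rule bounded_linear.has_vector_derivative[OF matrix_vector_mul_bounded_linear f])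
  have "((\<lambda>\<tau>. f \<tau> \<bullet> (A *v f \<tau>)) has_derivative
          (\<lambda>h. f t \<bullet> (h *\<^sub>R (A *v f')) + (h *\<^sub>R f') \<bullet> (A *v f t))) (at t within T)"
    using has_derivative_inner f Af unfolding has_vector_derivative_def .
  moreover have "f' \<bullet> (A *v f t) = f t \<bullet> (A *v f')"
    using sym_mat_inner_commute[OF A] .
  ultimately have "((\<lambda>\<tau>. f \<tau> \<bullet> (A *v f \<tau>)) has_real_derivative 2 * (f t \<bullet> (A *v f')))
                     (at t within T)"
    unfolding has_field_derivative_def
    by (elim has_derivative_eq_rhs) (simp add: fun_eq_iff algebra_simps)
  from DERIV_cmult[OF this, of "1/2"] show ?thesis by simp
qed

lemma power_balance:
  fixes L R :: "real^'s^'s" and C G :: "real^'r^'r" and \<Gamma> :: "real^'r^'s"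
  assumes current: "- (L *v i'') = R *v i' + \<Gamma> *v v' + \<upsilon> *\<^sub>R w"
    and voltage: "C *v v'' = transpose \<Gamma> *v i' + \<upsilon> *\<^sub>R z - G *v v'"
  shows "i' \<bullet> (L *v i'') + v' \<bullet> (C *v v'')
           = \<upsilon> * (v' \<bullet> z - i' \<bullet> w) - i' \<bullet> (R *v i') - v' \<bullet> (G *v v')"
proof -
  have "i' \<bullet> (L *v i'') = - (i' \<bullet> (R *v i')) - i' \<bullet> (\<Gamma> *v v') - \<upsilon> * (i' \<bullet> w)"
    using arg_cong[OF current, of "inner i'"] by (simp add: inner_add_right)
  moreover have "v' \<bullet> (C *v v'') = i' \<bullet> (\<Gamma> *v v') + \<upsilon> * (v' \<bullet> z) - v' \<bullet> (G *v v')"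
    using arg_cong[OF voltage, of "inner v'"] inner_transpose_matrix_vector[of v' \<Gamma> i']
    by (simp add: inner_add_right inner_diff_right del: transpose_matrix_vector)
  ultimately show ?thesis by (simp add: algebra_simps)
qed

theorem proposition2:
  fixes L R :: "real^'s^'s" and C G :: "real^'r^'r"
    and \<Gamma>0 \<Gamma>1 :: "real^'r^'s" and B0 B1 :: "real^'m^'s" and Vs :: "real^'m"
    and T :: "real set"
    and I Id Idd :: "real \<Rightarrow> real^'s" and V Vd Vdd :: "real \<Rightarrow> real^'r"
    and u \<upsilon> :: "real \<Rightarrow> real"
  assumes L: "pos_def_mat L" and C: "pos_def_mat C"
    and R: "pos_semidef_mat R" and G: "pos_semidef_mat G"
    and u_range: "\<And>t. t \<in> T \<Longrightarrow> u t \<in> {0..1}"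
    and dI: "\<And>t. t \<in> T \<Longrightarrow> (I has_vector_derivative Id t) (at t within T)"
    and dV: "\<And>t. t \<in> T \<Longrightarrow> (V has_vector_derivative Vd t) (at t within T)"
    and dId: "\<And>t. t \<in> T \<Longrightarrow> (Id has_vector_derivative Idd t) (at t within T)"
    and dVd: "\<And>t. t \<in> T \<Longrightarrow> (Vd has_vector_derivative Vdd t) (at t within T)"
    and du: "\<And>t. t \<in> T \<Longrightarrow> (u has_real_derivative \<upsilon> t) (at t within T)"
    and eqI: "\<And>t. t \<in> T \<Longrightarrow>
        - (L *v Idd t) = R *v Id t + (u t *\<^sub>R \<Gamma>1 + (1 - u t) *\<^sub>R \<Gamma>0) *v Vd t
          + \<upsilon> t *\<^sub>R ((\<Gamma>1 - \<Gamma>0) *v V t - (B1 - B0) *v Vs)"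
    and eqV: "\<And>t. t \<in> T \<Longrightarrow>
        C *v Vdd t = transpose (u t *\<^sub>R \<Gamma>1 + (1 - u t) *\<^sub>R \<Gamma>0) *v Id t
          + \<upsilon> t *\<^sub>R (transpose (\<Gamma>1 - \<Gamma>0) *v I t) - G *v Vd t"
  shows "\<forall>t\<in>T. \<exists>D.
     ((\<lambda>\<tau>. (1/2) * (Id \<tau> \<bullet> (L *v Id \<tau>)) + (1/2) * (Vd \<tau> \<bullet> (C *v Vd \<tau>)))
        has_real_derivative D) (at t within T)
     \<and> D \<le> \<upsilon> t * (Vd t \<bullet> (transpose (\<Gamma>1 - \<Gamma>0) *v I t)
                    - Id t \<bullet> ((\<Gamma>1 - \<Gamma>0) *v V t)
                    - Id t \<bullet> ((B0 - B1) *v Vs))"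
proof
  fix t assume t: "t \<in> T"
  let ?D = "Id t \<bullet> (L *v Idd t) + Vd t \<bullet> (C *v Vdd t)"
  have "sym_mat L" "sym_mat C"
    using L C by (simp_all add: pos_def_mat_def)
  then have "((\<lambda>\<tau>. (1/2) * (Id \<tau> \<bullet> (L *v Id \<tau>)) + (1/2) * (Vd \<tau> \<bullet> (C *v Vd \<tau>)))
               has_real_derivative ?D) (at t within T)"
    using dId[OF t] dVd[OF t] by (intro DERIV_add has_real_derivative_half_quadratic_form)
  moreover have "?D = \<upsilon> t * (Vd t \<bullet> (transpose (\<Gamma>1 - \<Gamma>0) *v I t)
                              - Id t \<bullet> ((\<Gamma>1 - \<Gamma>0) *v V t - (B1 - B0) *v Vs))
                      - Id t \<bullet> (R *v Id t) - Vd t \<bullet> (G *v Vd t)"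
    by (rule power_balance[OF eqI[OF t] eqV[OF t]])
  moreover have "Id t \<bullet> (R *v Id t) \<ge> 0" "Vd t \<bullet> (G *v Vd t) \<ge> 0"
    using R G by (simp_all add: pos_semidef_mat_def)
  moreover have "(B0 - B1) *v Vs = - ((B1 - B0) *v Vs)"
    by (simp add: matrix_vector_mult_diff_rdistrib)
  ultimately show "\<exists>D. ((\<lambda>\<tau>. (1/2) * (Id \<tau> \<bullet> (L *v Id \<tau>)) + (1/2) * (Vd \<tau> \<bullet> (C *v Vd \<tau>)))
        has_real_derivative D) (at t within T)
     \<and> D \<le> \<upsilon> t * (Vd t \<bullet> (transpose (\<Gamma>1 - \<Gamma>0) *v I t)
                    - Id t \<bullet> ((\<Gamma>1 - \<Gamma>0) *v V t)
                    - Id t \<bullet> ((B0 - B1) *v Vs))"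
    by (intro exI[of _ ?D]) (simp add: inner_diff_right algebra_simps)
qed

end
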